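(* Let $p\ge3$ and let $\{(a_j,b_j)\}_{j\ge1}$ be a $p$-periodic sequence with $a_j>0$, $b_j\in\mathbb{R}$. Let $m$ be the discrete $m$-function with continued fraction coefficients $\{(a_j,b_j)\}_{j\ge1}$, and let $m^-$ be the discrete $m$-function whose continued fraction coefficients are purely periodic with one period given by \[ (a_{p-1},b_p),(a_{p-2},b_{p-1}),\ldots,(a_1,b_2),(a_p,b_1). \] For $N\in\mathbb{N}$ let $m_N$ denote the discrete $m$-function with continued fraction coefficients $\{(a_n,b_n)\}_{n\ge N+1}$. Then for $\ell\in\{1,\ldots,p-2\}$, the sequence $\{(a_j,b_j)\}$ is doubly palindromic with period $p$ and first length $\ell$ if and only if $m^-=m_{\ell+1}$.
   Context: A discrete $m$-function is a function $m(z)=\int\frac{d\rho(x)}{x-z}$ on $\mathbb{C}_+=\{z:\operatorname{Im} z>0\}$, where $\rho$ is a probability measure on $\mathbb{R}$ with compact support. Such $m$ has a unique continued fraction expansion \[ m(z)=\cfrac{1}{b_1-z-\cfrac{a_1^2}{b_2-z-\cfrac{a_2^2}{b_3-z-\cdots}}} \] valid on $\mathbb{C}_+$, with bounded sequences $a_n>0$, $b_n\in\mathbb{R}$; the pairs $\{(a_n,b_n)\}_{n\ge1}$ are its continued fraction coefficients, and conversely every bounded such sequence is the coefficient sequence of a unique discrete $m$-function. Doubly palindromic: a $p$-periodic sequence $\{(a_j,b_j)\}$ is doubly palindromic with period $p$ and first length $\ell$ ($1\le\ell\le p-2$) if the word $a_1a_2\cdots a_p$ is the concatenation of a palindrome of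 length $\ell$ and a palindrome of length $p-\ell$, and the word $b_1b_2\cdots b_p$ is the concatenation of a palindrome of length $\ell+1$ and a palindrome of length $p-\ell-1$. *)

theory Defs
  imports "HOL-Analysis.Analysis"
begin

text \<open>Sequences are indexed from 1: a j, b j for j \<ge> 1 (index 0 unused).\<close>

fun cf_trunc :: "(nat \<Rightarrow> real) \<Rightarrow> (nat \<Rightarrow> real) \<Rightarrow> nat \<Rightarrow> nat \<Rightarrow> complex \<Rightarrow> complex" where
  "cf_trunc a b 0 k z = 0"
| "cf_trunc a b (Suc n) k z =
     1 / (complex_of_real (b k) - z - complex_of_real ((a k)^2) * cf_trunc a b n (Suc k) z)"

text \<open>The discrete m-function whose continued fraction coefficients are {(a_j,b_j)}_{j\<ge>k},
  i.e. the value of the (convergent, for bounded coefficients) continued fraction on C_+.\<close>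
definition mfun :: "(nat \<Rightarrow> real) \<Rightarrow> (nat \<Rightarrow> real) \<Rightarrow> nat \<Rightarrow> complex \<Rightarrow> complex" where
  "mfun a b k z = lim (\<lambda>n. cf_trunc a b n k z)"

definition periodic_seq :: "(nat \<Rightarrow> real) \<Rightarrow> nat \<Rightarrow> bool" where
  "periodic_seq f p \<longleftrightarrow> (\<forall>j\<ge>1. f (j + p) = f j)"

definition palindrome :: "'a list \<Rightarrow> bool" where
  "palindrome w \<longleftrightarrow> rev w = w"

definition word :: "(nat \<Rightarrow> real) \<Rightarrow> nat \<Rightarrow> real list" where
  "word f p = map f [1..<p+1]"

definition doubly_palindromic ::
  "(nat \<Rightarrow> real) \<Rightarrow> (nat \<Rightarrow> real) \<Rightarrow> nat \<Rightarrow> nat \<Rightarrow> bool" where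
  "doubly_palindromic a b p l \<longleftrightarrow>
     periodic_seq a p \<and> periodic_seq b p \<and> 1 \<le> l \<and> l + 2 \<le> p \<and>
     palindrome (take l (word a p)) \<and> palindrome (drop l (word a p)) \<and>
     palindrome (take (l+1) (word b p)) \<and> palindrome (drop (l+1) (word b p))"

text \<open>Reflected coefficients: purely periodic with one period
  (a_(p-1),b_p),(a_(p-2),b_(p-1)),...,(a_1,b_2),(a_p,b_1).\<close>
definition refl_a :: "(nat \<Rightarrow> real) \<Rightarrow> nat \<Rightarrow> nat \<Rightarrow> real" where
  "refl_a a p j = (let i = (j - 1) mod p in if i = p - 1 then a p else a (p - 1 - i))"

definition refl_b :: "(nat \<Rightarrow> real) \<Rightarrow> nat \<Rightarrow> nat \<Rightarrow> real" where
  "refl_b b p j = b (p - (j - 1) mod p)"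

end

theory Submission
  imports Defs
begin

text \<open>
  A discrete m-function determines its continued fraction coefficients. At \<open>z = i y\<close> with
  \<open>y\<^sup>2 \<ge> 8 sup\<^sub>j a\<^sub>j\<^sup>2\<close>, the step \<open>w \<mapsto> 1 / (b - z - a\<^sup>2 w)\<close> maps the disc \<open>\<bar>w\<bar> \<le> 2/y\<close> into itself
  and contracts it by \<open>1/2\<close>, so the truncations converge and \<open>m(z) = 1 / (b\<^sub>1 - z - a\<^sub>1\<^sup>2 m\<^sub>1(z))\<close>.
  As \<open>m(i y) \<rightarrow> 0\<close> and \<open>i y m(i y) \<rightarrow> -1\<close> for \<open>y \<rightarrow> \<infinity>\<close>, this identity recovers \<open>b\<^sub>1\<close>, then \<open>a\<^sub>1\<^sup>2\<close>
  (hence \<open>a\<^sub>1 > 0\<close>), then \<open>m\<^sub>1\<close>, and inductively every coefficient. So \<open>m\<^sup>- = m\<^bsub>l+1\<^esub>\<close> says that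
  the reflected coefficient sequence equals the shifted one.

  Reading \<open>a\<close> and \<open>b\<close> cyclically with indices in \<open>\<int>/p\<close>, the coefficients of \<open>m\<^sup>-\<close> are
  \<open>(a\<^bsub>-j\<^esub>, b\<^bsub>1-j\<^esub>)\<close> and those of \<open>m\<^bsub>l+1\<^esub>\<close> are \<open>(a\<^bsub>l+1+j\<^esub>, b\<^bsub>l+1+j\<^esub>)\<close>. They coincide iff \<open>k \<mapsto> l + 1 - k\<close>
  is a symmetry of the cyclic word \<open>a\<close> and \<open>k \<mapsto> l + 2 - k\<close> one of \<open>b\<close>, and a cyclic word
  \<open>f\<^sub>1 \<dots> f\<^sub>p\<close> is invariant under \<open>k \<mapsto> c - k\<close> iff \<open>f\<^sub>1 \<dots> f\<^bsub>c-1\<^esub>\<close> and \<open>f\<^sub>c \<dots> f\<^sub>p\<close> are palindromes.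
\<close>

section \<open>Convergence of the continued fraction on the imaginary axis\<close>

definition cf_step :: "real \<Rightarrow> real \<Rightarrow> complex \<Rightarrow> complex \<Rightarrow> complex" where
  "cf_step a c z w = 1 / (complex_of_real c - z - complex_of_real (a^2) * w)"

lemma cf_trunc_Suc_eq_cf_step:
  "cf_trunc a b (Suc n) k z = cf_step (a k) (b k) z (cf_trunc a b n (Suc k) z)"
  by (simp add: cf_step_def)

lemma cf_trunc_shift: "cf_trunc a b n (k + s) z = cf_trunc (\<lambda>j. a (j + s)) (\<lambda>j. b (j + s)) n k z"
  by (induction n arbitrary: k) (simp_all add: cf_trunc_Suc_eq_cf_step flip: add_Suc)

lemma mfun_shift: "mfun a b (k + s) z = mfun (\<lambda>j. a (j + s)) (\<lambda>j. b (j + s)) k z"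
  unfolding mfun_def cf_trunc_shift ..

lemma cf_step_eq_iff:
  "cf_step a c z w = cf_step a' c' z w' \<longleftrightarrow>
     complex_of_real c - complex_of_real (a^2) * w = complex_of_real c' - complex_of_real (a'^2) * w'"
  by (simp add: cf_step_def algebra_simps del: of_real_power)

lemma norm_cf_step_denominator_ge:
  assumes "a^2 \<le> K" "0 < y" "8 * K \<le> y^2" "cmod w \<le> 2 / y"
  shows "y / 2 \<le> cmod (complex_of_real c - \<i> * complex_of_real y - complex_of_real (a^2) * w)"
proof -
  have "0 \<le> K"
    using assms(1) zero_le_power2 order_trans by blast
  then have "a^2 * \<bar>Im w\<bar> \<le> K * (2 / y)"
    using assms abs_Im_le_cmod[of w] by (intro mult_mono) auto
  also have "\<dots> \<le> y / 2"
    using assms \<open>0 \<le> K\<close> by (simp add: field_simps power2_eq_square)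
  finally have "\<bar>a^2 * Im w\<bar> \<le> y / 2"
    by (simp add: abs_mult)
  then have "y / 2 \<le> \<bar>- y - a^2 * Im w\<bar>"
    using \<open>0 < y\<close> by linarith
  also have "\<dots> = \<bar>Im (complex_of_real c - \<i> * complex_of_real y - complex_of_real (a^2) * w)\<bar>"
    by simp
  finally show ?thesis
    using abs_Im_le_cmod order_trans by blast
qed

lemma norm_cf_step_le:
  assumes "a^2 \<le> K" "0 < y" "8 * K \<le> y^2" "cmod w \<le> 2 / y"
  shows "cmod (cf_step a c (\<i> * complex_of_real y) w) \<le> 2 / y"
proof -
  let ?D = "complex_of_real c - \<i> * complex_of_real y - complex_of_real (a^2) * w"
  have "y / 2 \<le> cmod ?D"
    by (rule norm_cf_step_denominator_ge[OF assms])
  moreover have "0 < y / 2"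
    using \<open>0 < y\<close> by simp
  ultimately have "1 / cmod ?D \<le> 1 / (y / 2)"
    by (intro frac_le) auto
  then show ?thesis
    by (simp add: cf_step_def norm_divide)
qed

lemma cf_step_contraction:
  assumes "a^2 \<le> K" "0 < y" "8 * K \<le> y^2" "cmod u \<le> 2 / y" "cmod v \<le> 2 / y"
  shows "cmod (cf_step a c (\<i> * complex_of_real y) u - cf_step a c (\<i> * complex_of_real y) v)
           \<le> cmod (u - v) / 2"
proof -
  have "0 \<le> K"
    using assms(1) zero_le_power2 order_trans by blast
  define Du where "Du = complex_of_real c - \<i> * complex_of_real y - complex_of_real (a^2) * u"
  define Dv where "Dv = complex_of_real c - \<i> * complex_of_real y - complex_of_real (a^2) * v"
  have du: "y / 2 \<le> cmod Du" and dv: "y / 2 \<le> cmod Dv"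
    unfolding Du_def Dv_def using assms by (blast intro: norm_cf_step_denominator_ge)+
  then have "Du \<noteq> 0" "Dv \<noteq> 0" using \<open>0 < y\<close> by auto
  then have "cf_step a c (\<i> * complex_of_real y) u - cf_step a c (\<i> * complex_of_real y) v
               = complex_of_real (a^2) * (u - v) / (Du * Dv)"
    by (simp add: cf_step_def Du_def Dv_def field_simps del: of_real_power)
  also have "cmod \<dots> = a^2 * cmod (u - v) / (cmod Du * cmod Dv)"
    by (simp add: norm_divide norm_mult del: of_real_power)
  also have "\<dots> \<le> K * cmod (u - v) / ((y / 2) * (y / 2))"
    using assms(1,2) \<open>0 \<le> K\<close> du dv by (intro frac_le mult_right_mono mult_mono) auto
  also have "\<dots> \<le> cmod (u - v) / 2"
  proof -
    have "8 * K * cmod (u - v) \<le> y^2 * cmod (u - v)"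
      using assms(3) by (intro mult_right_mono) auto
    then show ?thesis
      using \<open>0 < y\<close> by (simp add: field_simps power2_eq_square)
  qed
  finally show ?thesis .
qed

lemma norm_cf_trunc_le:
  assumes "\<And>j. (a j)^2 \<le> K" "0 < y" "8 * K \<le> y^2"
  shows "cmod (cf_trunc a b n k (\<i> * complex_of_real y)) \<le> 2 / y"
proof (induction n arbitrary: k)
  case 0
  then show ?case using \<open>0 < y\<close> by simp
next
  case (Suc n)
  then show ?case
    unfolding cf_trunc_Suc_eq_cf_step using assms by (intro norm_cf_step_le) auto
qed

lemma norm_cf_trunc_Suc_diff_le:
  assumes "\<And>j. (a j)^2 \<le> K" "0 < y" "8 * K \<le> y^2"
  shows "cmod (cf_trunc a b (Suc n) k (\<i> * complex_of_real y) - cf_trunc a b n k (\<i> * complex_of_real y))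
           \<le> (1/2)^n * (2 / y)"
proof (induction n arbitrary: k)
  case 0
  then show ?case using norm_cf_trunc_le[of a K y b 1 k] assms by simp
next
  case (Suc n)
  have "cmod (cf_trunc a b (Suc (Suc n)) k (\<i> * complex_of_real y) - cf_trunc a b (Suc n) k (\<i> * complex_of_real y))
          \<le> cmod (cf_trunc a b (Suc n) (Suc k) (\<i> * complex_of_real y) - cf_trunc a b n (Suc k) (\<i> * complex_of_real y)) / 2"
    unfolding cf_trunc_Suc_eq_cf_step[of a b "Suc n" k] cf_trunc_Suc_eq_cf_step[of a b n k]
    using assms by (intro cf_step_contraction norm_cf_trunc_le) auto
  also have "\<dots> \<le> (1/2)^Suc n * (2 / y)"
    using Suc.IH[of "Suc k"] by simp
  finally show ?case .
qed

lemma cf_trunc_LIMSEQ_mfun: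
  assumes "\<And>j. (a j)^2 \<le> K" "0 < y" "8 * K \<le> y^2"
  shows "(\<lambda>n. cf_trunc a b n k (\<i> * complex_of_real y)) \<longlonglongrightarrow> mfun a b k (\<i> * complex_of_real y)"
proof -
  define X where "X n = cf_trunc a b n k (\<i> * complex_of_real y)" for n
  have "summable (\<lambda>n. (1/2::real)^n * (2 / y))"
    by (intro summable_mult2 summable_geometric) simp
  moreover have "norm (X (Suc n) - X n) \<le> (1/2)^n * (2 / y)" for n
    unfolding X_def by (rule norm_cf_trunc_Suc_diff_le[OF assms])
  ultimately have "summable (\<lambda>n. X (Suc n) - X n)"
    by (rule summable_comparison_test')
  then have "convergent (\<lambda>n. X n - X 0)"
    by (simp add: summable_iff_convergent sum_lessThan_telescope)
  then have "convergent X"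
    by (simp add: convergent_diff_const_right_iff)
  then show ?thesis
    unfolding X_def mfun_def by (simp add: convergent_LIMSEQ_iff)
qed

lemma norm_mfun_le:
  assumes "\<And>j. (a j)^2 \<le> K" "0 < y" "8 * K \<le> y^2"
  shows "cmod (mfun a b k (\<i> * complex_of_real y)) \<le> 2 / y"
  using norm_cf_trunc_le[of a K y, OF assms]
  by (intro Lim_norm_ubound[OF trivial_limit_sequentially cf_trunc_LIMSEQ_mfun[of a K y, OF assms]]) auto

lemma mfun_recursion:
  assumes "\<And>j. (a j)^2 \<le> K" "0 < y" "8 * K \<le> y^2"
  shows "mfun a b k (\<i> * complex_of_real y)
           = cf_step (a k) (b k) (\<i> * complex_of_real y) (mfun a b (Suc k) (\<i> * complex_of_real y))"
proof -
  let ?z = "\<i> * complex_of_real y"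
  have "y / 2 \<le> cmod (complex_of_real (b k) - ?z - complex_of_real ((a k)^2) * mfun a b (Suc k) ?z)"
    using assms by (intro norm_cf_step_denominator_ge norm_mfun_le) auto
  then have "complex_of_real (b k) - ?z - complex_of_real ((a k)^2) * mfun a b (Suc k) ?z \<noteq> 0"
    using \<open>0 < y\<close> by auto
  then have "(\<lambda>n. cf_trunc a b (Suc n) k ?z)
               \<longlonglongrightarrow> cf_step (a k) (b k) ?z (mfun a b (Suc k) ?z)"
    unfolding cf_trunc_Suc_eq_cf_step cf_step_def
    by (intro tendsto_intros cf_trunc_LIMSEQ_mfun[of a K y, OF assms])
  moreover have "(\<lambda>n. cf_trunc a b (Suc n) k ?z) \<longlonglongrightarrow> mfun a b k ?z"
    by (rule LIMSEQ_Suc[OF cf_trunc_LIMSEQ_mfun[of a K y, OF assms]])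
  ultimately show ?thesis
    using LIMSEQ_unique by blast
qed

section \<open>The m-function determines the coefficients\<close>

lemma tendsto_unique_eventually_eq:
  fixes f g :: "'a \<Rightarrow> 'b::t2_space"
  assumes "F \<noteq> bot" "\<forall>\<^sub>F x in F. f x = g x" "(f \<longlongrightarrow> c) F" "(g \<longlongrightarrow> d) F"
  shows "c = d"
  using tendsto_unique[OF assms(1) _ assms(4)] tendsto_cong[OF assms(2)] assms(3) by blast

lemma eventually_cf_regime: "\<forall>\<^sub>F y in at_top. 0 < y \<and> 8 * K \<le> (y::real)^2"
proof -
  have "0 < y \<and> 8 * K \<le> y^2" if "max 1 (8 * K) \<le> y" for y
  proof -
    have "y \<le> y^2"
      using that by (simp add: power2_eq_square)
    then show ?thesis
      using that by auto
  qed
  then show ?thesis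
    using eventually_ge_at_top[of "max 1 (8 * K)"] by (auto elim: eventually_mono)
qed

lemma mfun_tendsto_0:
  assumes "\<And>j. (a j)^2 \<le> K"
  shows "((\<lambda>y. mfun a b k (\<i> * complex_of_real y)) \<longlongrightarrow> 0) at_top"
proof (rule Lim_null_comparison)
  show "\<forall>\<^sub>F y in at_top. cmod (mfun a b k (\<i> * complex_of_real y)) \<le> 2 / y"
    using eventually_cf_regime[of K] by (rule eventually_mono) (use assms norm_mfun_le in blast)
  show "((\<lambda>y::real. 2 / y) \<longlongrightarrow> 0) at_top"
    by (intro tendsto_divide_0[OF tendsto_const] filterlim_at_top_imp_at_infinity filterlim_ident)
qed

text \<open>By the recursion \<open>z m + 1 = (b\<^sub>k - a\<^sub>k\<^sup>2 m\<^sub>1) m\<close>, which tends to \<open>0\<close> because \<open>m\<close> and \<open>m\<^sub>1\<close> do.\<close>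
lemma mfun_times_z_tendsto_minus_1:
  assumes "\<And>j. (a j)^2 \<le> K"
  shows "((\<lambda>y. \<i> * complex_of_real y * mfun a b k (\<i> * complex_of_real y)) \<longlongrightarrow> -1) at_top"
proof -
  define m where "m n y = mfun a b n (\<i> * complex_of_real y)" for n y
  have identity: "\<i> * complex_of_real y * m k y
          = (complex_of_real (b k) - complex_of_real ((a k)^2) * m (Suc k) y) * m k y - 1"
    if "0 < y" "8 * K \<le> y^2" for y
  proof -
    define D where "D = complex_of_real (b k) - \<i> * complex_of_real y - complex_of_real ((a k)^2) * m (Suc k) y"
    have "y / 2 \<le> cmod D"
      unfolding D_def m_def using assms that by (intro norm_cf_step_denominator_ge norm_mfun_le)
    then have "D \<noteq> 0"
      using \<open>0 < y\<close> by auto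
    moreover have "m k y = 1 / D"
      unfolding m_def D_def cf_step_def[symmetric] by (rule mfun_recursion[of a K y, OF assms that])
    ultimately have "D * m k y = 1"
      by simp
    moreover have "complex_of_real (b k) - complex_of_real ((a k)^2) * m (Suc k) y = D + \<i> * complex_of_real y"
      by (simp add: D_def)
    ultimately show ?thesis
      by (simp add: distrib_right)
  qed
  have "\<forall>\<^sub>F y in at_top. (complex_of_real (b k) - complex_of_real ((a k)^2) * m (Suc k) y) * m k y - 1
               = \<i> * complex_of_real y * m k y"
    using eventually_cf_regime[of K] by (rule eventually_mono) (simp add: identity)
  moreover have "((\<lambda>y. (complex_of_real (b k) - complex_of_real ((a k)^2) * m (Suc k) y) * m k y - 1)
                   \<longlongrightarrow> (complex_of_real (b k) - complex_of_real ((a k)^2) * 0) * 0 - 1) at_top"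
    unfolding m_def by (intro tendsto_intros mfun_tendsto_0[OF assms])
  ultimately show ?thesis
    unfolding m_def by (simp add: tendsto_cong)
qed

lemma affine_mfun_eventually_eq_imp_eq:
  fixes c c' \<alpha> \<alpha>' :: real
  assumes a: "\<And>j. (a j)^2 \<le> K" and a': "\<And>j. (a' j)^2 \<le> K"
    and eq: "\<forall>\<^sub>F y in at_top. complex_of_real c - complex_of_real \<alpha> * mfun a b k (\<i> * complex_of_real y)
                            = complex_of_real c' - complex_of_real \<alpha>' * mfun a' b' k' (\<i> * complex_of_real y)"
  shows "c = c'" "\<alpha> = \<alpha>'"
proof -
  define m where "m y = mfun a b k (\<i> * complex_of_real y)" for y
  define m' where "m' y = mfun a' b' k' (\<i> * complex_of_real y)" for y
  have eq': "\<forall>\<^sub>F y in at_top. complex_of_real c - complex_of_real \<alpha> * m y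
                             = complex_of_real c' - complex_of_real \<alpha>' * m' y"
    using eq unfolding m_def m'_def .
  have "((\<lambda>y. complex_of_real c - complex_of_real \<alpha> * m y) \<longlongrightarrow> complex_of_real c) at_top"
    using tendsto_diff[OF tendsto_const tendsto_mult[OF tendsto_const mfun_tendsto_0[of a K, OF a]]]
    unfolding m_def by simp
  moreover have "((\<lambda>y. complex_of_real c' - complex_of_real \<alpha>' * m' y) \<longlongrightarrow> complex_of_real c') at_top"
    using tendsto_diff[OF tendsto_const tendsto_mult[OF tendsto_const mfun_tendsto_0[of a' K, OF a']]]
    unfolding m'_def by simp
  ultimately have "complex_of_real c = complex_of_real c'"
    by (rule tendsto_unique_eventually_eq[OF trivial_limit_at_top_linorder eq'])
  then show "c = c'"
    by simp
  with eq' have "\<forall>\<^sub>F y in at_top. \<i> * complex_of_real y * (complex_of_real \<alpha> * m y)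
                                   = \<i> * complex_of_real y * (complex_of_real \<alpha>' * m' y)"
    by (auto elim: eventually_mono)
  moreover have "((\<lambda>y. \<i> * complex_of_real y * (complex_of_real \<alpha> * m y)) \<longlongrightarrow> - complex_of_real \<alpha>) at_top"
    using tendsto_mult[OF tendsto_const mfun_times_z_tendsto_minus_1[of a K b k, OF a]]
    unfolding m_def by (simp add: mult.left_commute)
  moreover have "((\<lambda>y. \<i> * complex_of_real y * (complex_of_real \<alpha>' * m' y)) \<longlongrightarrow> - complex_of_real \<alpha>') at_top"
    using tendsto_mult[OF tendsto_const mfun_times_z_tendsto_minus_1[of a' K b' k', OF a']]
    unfolding m'_def by (simp add: mult.left_commute)
  ultimately have "- complex_of_real \<alpha> = - complex_of_real \<alpha>'"
    by (rule tendsto_unique_eventually_eq[OF trivial_limit_at_top_linorder])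
  then show "\<alpha> = \<alpha>'"
    by simp
qed

lemma mfun_eventually_eq_imp_head_eq:
  assumes a: "\<And>j. (a j)^2 \<le> K" and a': "\<And>j. (a' j)^2 \<le> K"
    and pos: "0 < a k" "0 < a' k'"
    and eq: "\<forall>\<^sub>F y in at_top. mfun a b k (\<i> * complex_of_real y) = mfun a' b' k' (\<i> * complex_of_real y)"
  shows "a k = a' k'" "b k = b' k'"
    and "\<forall>\<^sub>F y in at_top.
           mfun a b (Suc k) (\<i> * complex_of_real y) = mfun a' b' (Suc k') (\<i> * complex_of_real y)"
proof -
  define m where "m y = mfun a b (Suc k) (\<i> * complex_of_real y)" for y
  define m' where "m' y = mfun a' b' (Suc k') (\<i> * complex_of_real y)" for y
  have denominators_eq: "\<forall>\<^sub>F y in at_top. complex_of_real (b k) - complex_of_real ((a k)^2) * m y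
                          = complex_of_real (b' k') - complex_of_real ((a' k')^2) * m' y"
    using eq eventually_cf_regime[of K]
  proof eventually_elim
    case (elim y)
    then show ?case
      unfolding m_def m'_def
      using mfun_recursion[of a K y b k] mfun_recursion[of a' K y b' k'] a a'
      by (simp add: cf_step_eq_iff)
  qed
  show b_eq: "b k = b' k'"
    using affine_mfun_eventually_eq_imp_eq(1)[OF a a' denominators_eq[unfolded m_def m'_def]] .
  have "(a k)^2 = (a' k')^2"
    using affine_mfun_eventually_eq_imp_eq(2)[OF a a' denominators_eq[unfolded m_def m'_def]] .
  then show a_eq: "a k = a' k'"
    using pos by (simp add: power2_eq_iff)
  have "complex_of_real ((a k)^2) \<noteq> 0"
    using pos(1) by simp
  with denominators_eq show "\<forall>\<^sub>F y in at_top. m y = m' y"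
    unfolding b_eq a_eq by (auto elim: eventually_mono)
qed

lemma mfun_eventually_eq_imp_coeffs_eq:
  assumes a: "\<And>j. (a j)^2 \<le> K" and a': "\<And>j. (a' j)^2 \<le> K"
    and pos: "\<And>j. 0 < a j" "\<And>j. 0 < a' j"
    and eq: "\<forall>\<^sub>F y in at_top. mfun a b k (\<i> * complex_of_real y) = mfun a' b' k' (\<i> * complex_of_real y)"
  shows "a (k + j) = a' (k' + j) \<and> b (k + j) = b' (k' + j)"
proof -
  have "\<forall>\<^sub>F y in at_top. mfun a b (k + j) (\<i> * complex_of_real y) = mfun a' b' (k' + j) (\<i> * complex_of_real y)"
  proof (induction j)
    case 0
    then show ?case using eq by simp
  next
    case (Suc j)
    show ?case
      using mfun_eventually_eq_imp_head_eq(3)[of a K a' "k + j" "k' + j" b b', OF a a' pos Suc.IH]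
      by simp
  qed
  then show ?thesis
    using mfun_eventually_eq_imp_head_eq(1,2)[of a K a' "k + j" "k' + j" b b', OF a a' pos] by simp
qed
section \<open>Cyclic words, reflections and palindromes\<close>

text \<open>The word \<open>f\<^sub>1 \<dots> f\<^sub>p\<close> read cyclically; integer indices make the reflections \<open>k \<mapsto> c - k\<close>
  available.\<close>
definition cyclic_ext :: "(nat \<Rightarrow> 'a) \<Rightarrow> nat \<Rightarrow> int \<Rightarrow> 'a" where
  "cyclic_ext f p k = f (nat ((k - 1) mod int p) + 1)"

lemma cyclic_ext_eqI:
  assumes "1 \<le> r" "r \<le> p" "int p dvd k - int r"
  shows "cyclic_ext f p k = f r"
proof -
  have "(k - 1) mod int p = (int r - 1) mod int p"
    using assms(3) by (simp add: mod_eq_dvd_iff)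
  also have "\<dots> = int r - 1"
    using assms(1,2) by simp
  finally have "nat ((k - 1) mod int p) + 1 = r"
    using assms(1) by linarith
  then show ?thesis
    by (simp add: cyclic_ext_def)
qed

lemma cyclic_ext_cong:
  assumes "int p dvd k - k'"
  shows "cyclic_ext f p k = cyclic_ext f p k'"
proof -
  have "(k - 1) mod int p = (k' - 1) mod int p"
    using assms by (simp add: mod_eq_dvd_iff)
  then show ?thesis
    by (simp add: cyclic_ext_def)
qed

lemma ex_cyclic_representative:
  assumes "0 < p"
  obtains r where "1 \<le> r" "r \<le> p" "int p dvd k - int r"
proof
  let ?r = "nat ((k - 1) mod int p) + 1"
  show "1 \<le> ?r" by simp
  show "?r \<le> p"
    using assms pos_mod_bound[of "int p" "k - 1"] by linarith
  have "int ?r = (k - 1) mod int p + 1"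
    using assms by simp
  then have "k - int ?r = (k - 1) - (k - 1) mod int p"
    by linarith
  then show "int p dvd k - int ?r"
    by (simp only: dvd_minus_mod)
qed

lemma cyclic_ext_in_image:
  assumes "0 < p"
  shows "cyclic_ext f p k \<in> f ` {1..p}"
proof -
  obtain r where "1 \<le> r" "r \<le> p" "int p dvd k - int r"
    using ex_cyclic_representative[OF assms] .
  then show ?thesis
    using cyclic_ext_eqI[of r p k f] by auto
qed

lemma periodic_seq_mod:
  assumes "periodic_seq f p" "0 < p" "1 \<le> j"
  shows "f j = f ((j - 1) mod p + 1)"
  using assms(3)
proof (induction j rule: less_induct)
  case (less j)
  show ?case
  proof (cases "p < j")
    case True
    have "1 \<le> j - p"
      using True by simp
    then have "f (j - p + p) = f (j - p)"
      using assms(1) unfolding periodic_seq_def by blast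
    then have "f j = f (j - p)"
      using True by simp
    also have "\<dots> = f ((j - p - 1) mod p + 1)"
      using less.IH[of "j - p"] True assms(2) by simp
    also have "(j - p - 1) mod p = (j - 1) mod p"
      using True by (simp add: mod_if le_mod_geq)
    finally show ?thesis .
  next
    case False
    then show ?thesis
      using less.prems by (cases "j = p") auto
  qed
qed

lemma cyclic_ext_of_nat:
  assumes "periodic_seq f p" "0 < p" "1 \<le> j"
  shows "cyclic_ext f p (int j) = f j"
proof -
  have "int j - int ((j - 1) mod p + 1) = int (j - 1) - int ((j - 1) mod p)"
    using assms(3) by simp
  also have "int p dvd \<dots>"
    by (simp add: mod_eq_dvd_iff[symmetric] of_nat_mod)
  finally have "cyclic_ext f p (int j) = f ((j - 1) mod p + 1)"
    using assms(2) by (intro cyclic_ext_eqI) (auto simp: Suc_le_eq)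
  then show ?thesis
    using periodic_seq_mod[OF assms] by simp
qed

lemma refl_a_eq_cyclic_ext:
  assumes "0 < p" "1 \<le> j"
  shows "refl_a a p j = cyclic_ext a p (- int j)"
proof -
  define i where "i = (j - 1) mod p"
  have "i < p"
    using assms(1) by (simp add: i_def)
  have "int p dvd int j - 1 - int i"
    using assms(2) by (simp add: i_def mod_eq_dvd_iff[symmetric] of_nat_mod of_nat_diff)
  then obtain q where q: "int j = int p * q + 1 + int i"
    by (auto simp: dvd_def algebra_simps)
  have refl: "refl_a a p j = (if i = p - 1 then a p else a (p - 1 - i))"
    by (simp add: refl_a_def i_def)
  show ?thesis
  proof (cases "i = p - 1")
    case True
    then have "- int j - int p = int p * (- q - 2)"
      using q assms(1) by (simp add: algebra_simps of_nat_diff)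
    then have "cyclic_ext a p (- int j) = a p"
      using assms(1) by (intro cyclic_ext_eqI) simp_all
    then show ?thesis
      using True refl by simp
  next
    case False
    then have "- int j - int (p - 1 - i) = int p * (- q - 1)"
      using q \<open>i < p\<close> by (simp add: algebra_simps of_nat_diff)
    then have "cyclic_ext a p (- int j) = a (p - 1 - i)"
      using False \<open>i < p\<close> by (intro cyclic_ext_eqI) simp_all
    then show ?thesis
      using False refl by simp
  qed
qed

lemma refl_b_eq_cyclic_ext:
  assumes "0 < p" "1 \<le> j"
  shows "refl_b b p j = cyclic_ext b p (1 - int j)"
proof -
  define i where "i = (j - 1) mod p"
  have "i < p"
    using assms(1) by (simp add: i_def)
  have "int p dvd int j - 1 - int i"
    using assms(2) by (simp add: i_def mod_eq_dvd_iff[symmetric] of_nat_mod of_nat_diff)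
  then obtain q where q: "int j = int p * q + 1 + int i"
    by (auto simp: dvd_def algebra_simps)
  then have "1 - int j - int (p - i) = int p * (- q - 1)"
    using \<open>i < p\<close> by (simp add: algebra_simps of_nat_diff)
  then have "cyclic_ext b p (1 - int j) = b (p - i)"
    using \<open>i < p\<close> by (intro cyclic_ext_eqI) simp_all
  then show ?thesis
    by (simp add: refl_b_def i_def)
qed

lemma palindrome_iff_nth: "palindrome w \<longleftrightarrow> (\<forall>i<length w. w ! (length w - Suc i) = w ! i)"
  unfolding palindrome_def by (simp add: list_eq_iff_nth_eq rev_nth)

lemma length_word [simp]: "length (word f p) = p"
  by (simp add: word_def)

lemma nth_word [simp]: "i < p \<Longrightarrow> word f p ! i = f (Suc i)"
  by (simp add: word_def nth_upt del: upt_Suc)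

lemma palindrome_take_word:
  assumes "l \<le> p"
  shows "palindrome (take l (word f p)) \<longleftrightarrow> (\<forall>i<l. f (Suc i) = f (l - i))"
  using assms by (auto simp: palindrome_iff_nth min_def Suc_diff_Suc)

lemma palindrome_drop_word:
  assumes "l \<le> p"
  shows "palindrome (drop l (word f p)) \<longleftrightarrow> (\<forall>i<p - l. f (l + Suc i) = f (p - i))"
  using assms by (auto simp: palindrome_iff_nth Suc_diff_Suc)

lemma palindromes_imp_cyclic_ext_symmetric:
  assumes "0 < p" "l \<le> p" "palindrome (take l (word f p)) \<and> palindrome (drop l (word f p))"
  shows "\<forall>k. cyclic_ext f p k = cyclic_ext f p (int l + 1 - k)"
proof -
  have take: "\<And>i. i < l \<Longrightarrow> f (Suc i) = f (l - i)"
    and drop: "\<And>i. i < p - l \<Longrightarrow> f (l + Suc i) = f (p - i)"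
    using assms(2,3) by (auto simp: palindrome_take_word palindrome_drop_word)
  show ?thesis
  proof
    fix k
    obtain r where r: "1 \<le> r" "r \<le> p" "int p dvd k - int r"
      using ex_cyclic_representative[OF assms(1)] .
    have "cyclic_ext f p k = f r"
      using r by (rule cyclic_ext_eqI)
    also have "\<dots> = cyclic_ext f p (int l + 1 - k)"
    proof (cases "r \<le> l")
      case True
      have "int p dvd (int l + 1 - k) - int (l + 1 - r)"
        using r(3) True by (simp add: of_nat_diff dvd_diff_commute)
      then have "cyclic_ext f p (int l + 1 - k) = f (l + 1 - r)"
        using r True assms(2) by (intro cyclic_ext_eqI) auto
      moreover have "f r = f (l + 1 - r)"
        using take[of "r - 1"] r True by simp
      ultimately show ?thesis
        by simp
    next
      case False
      have "(int l + 1 - k) - int (p + l + 1 - r) = - (k - int r) - int p"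
        using r(2) by (simp add: of_nat_diff)
      then have "int p dvd (int l + 1 - k) - int (p + l + 1 - r)"
        using r(3) by (metis dvd_diff dvd_minus_iff dvd_refl)
      then have "cyclic_ext f p (int l + 1 - k) = f (p + l + 1 - r)"
        using r False by (intro cyclic_ext_eqI) auto
      moreover have "f r = f (p + l + 1 - r)"
        using drop[of "r - l - 1"] r False by simp
      ultimately show ?thesis
        by simp
    qed
    finally show "cyclic_ext f p k = cyclic_ext f p (int l + 1 - k)" .
  qed
qed

lemma cyclic_ext_symmetric_imp_palindromes:
  assumes "l \<le> p" "\<forall>k. cyclic_ext f p k = cyclic_ext f p (int l + 1 - k)"
  shows "palindrome (take l (word f p)) \<and> palindrome (drop l (word f p))"
proof -
  have "f (Suc i) = f (l - i)" if "i < l" for i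
  proof -
    have "f (Suc i) = cyclic_ext f p (int (Suc i))"
      using that assms(1) by (intro cyclic_ext_eqI[symmetric]) auto
    also have "\<dots> = cyclic_ext f p (int (l - i))"
      using assms(2)[rule_format, of "int (Suc i)"] that by (simp add: of_nat_diff)
    also have "\<dots> = f (l - i)"
      using that assms(1) by (intro cyclic_ext_eqI) auto
    finally show ?thesis .
  qed
  moreover have "f (l + Suc i) = f (p - i)" if "i < p - l" for i
  proof -
    have "f (l + Suc i) = cyclic_ext f p (int (l + Suc i))"
      using that by (intro cyclic_ext_eqI[symmetric]) auto
    also have "\<dots> = cyclic_ext f p (- int i)"
      using assms(2)[rule_format, of "int (l + Suc i)"] by simp
    also have "\<dots> = f (p - i)"
      using that by (intro cyclic_ext_eqI) (auto simp: of_nat_diff)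
    finally show ?thesis .
  qed
  ultimately show ?thesis
    using assms(1) by (simp add: palindrome_take_word palindrome_drop_word)
qed

lemma palindromes_iff_cyclic_ext_symmetric:
  assumes "0 < p" "l \<le> p"
  shows "palindrome (take l (word f p)) \<and> palindrome (drop l (word f p))
           \<longleftrightarrow> (\<forall>k. cyclic_ext f p k = cyclic_ext f p (int l + 1 - k))"
  using palindromes_imp_cyclic_ext_symmetric[OF assms] cyclic_ext_symmetric_imp_palindromes[OF assms(2)]
  by blast

lemma cyclic_ext_symmetric_iff:
  assumes "0 < p"
  shows "(\<forall>k. cyclic_ext f p k = cyclic_ext f p (c - k))
           \<longleftrightarrow> (\<forall>j::nat. cyclic_ext f p (- int j - d) = cyclic_ext f p (int j + c + d))"
proof
  assume "\<forall>k. cyclic_ext f p k = cyclic_ext f p (c - k)"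
  then show "\<forall>j::nat. cyclic_ext f p (- int j - d) = cyclic_ext f p (int j + c + d)"
    by (metis add.commute diff_diff_eq2 diff_minus_eq_add minus_diff_eq)
next
  assume H: "\<forall>j::nat. cyclic_ext f p (- int j - d) = cyclic_ext f p (int j + c + d)"
  show "\<forall>k. cyclic_ext f p k = cyclic_ext f p (c - k)"
  proof
    fix k
    define j where "j = nat ((- k - d) mod int p)"
    have "int j = (- k - d) mod int p"
      using assms by (simp add: j_def)
    then have dvd: "int p dvd int j - (- k - d)"
      by (simp add: mod_eq_dvd_iff[symmetric])
    have "cyclic_ext f p k = cyclic_ext f p (- int j - d)"
      by (rule cyclic_ext_cong) (use dvd in \<open>simp add: algebra_simps\<close>)
    also have "\<dots> = cyclic_ext f p (int j + c + d)"
      using H by blast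
    also have "\<dots> = cyclic_ext f p (c - k)"
      by (rule cyclic_ext_cong) (use dvd in \<open>simp add: algebra_simps\<close>)
    finally show "cyclic_ext f p k = cyclic_ext f p (c - k)" .
  qed
qed

lemma doubly_palindromic_iff_reflection_eq_shift:
  assumes "periodic_seq a p" "periodic_seq b p" "1 \<le> l" "l + 2 \<le> p"
  shows "doubly_palindromic a b p l \<longleftrightarrow>
           (\<forall>j. refl_a a p (Suc j) = a (j + (l + 2)) \<and> refl_b b p (Suc j) = b (j + (l + 2)))"
proof -
  have "0 < p"
    using assms(4) by simp
  have a: "refl_a a p (Suc j) = cyclic_ext a p (- int j - 1)" for j
  proof -
    have "- int (Suc j) = - int j - 1"
      by simp
    with refl_a_eq_cyclic_ext[OF \<open>0 < p\<close>, of "Suc j" a] show ?thesis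
      by (simp only:)
  qed
  have a': "a (j + (l + 2)) = cyclic_ext a p (int j + (int l + 1) + 1)" for j
    using cyclic_ext_of_nat[OF assms(1) \<open>0 < p\<close>, of "j + (l + 2)"] by (simp add: algebra_simps)
  have b: "refl_b b p (Suc j) = cyclic_ext b p (- int j - 0)" for j
    using refl_b_eq_cyclic_ext[OF \<open>0 < p\<close>, of "Suc j" b] by simp
  have b': "b (j + (l + 2)) = cyclic_ext b p (int j + (int (l + 1) + 1) + 0)" for j
    using cyclic_ext_of_nat[OF assms(2) \<open>0 < p\<close>, of "j + (l + 2)"] by (simp add: algebra_simps)
  have "doubly_palindromic a b p l \<longleftrightarrow>
          (\<forall>k. cyclic_ext a p k = cyclic_ext a p (int l + 1 - k)) \<and>
          (\<forall>k. cyclic_ext b p k = cyclic_ext b p (int (l + 1) + 1 - k))"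
    using assms palindromes_iff_cyclic_ext_symmetric[OF \<open>0 < p\<close>, of l a]
      palindromes_iff_cyclic_ext_symmetric[OF \<open>0 < p\<close>, of "l + 1" b]
    by (auto simp: doubly_palindromic_def)
  also have "\<dots> \<longleftrightarrow> (\<forall>j. refl_a a p (Suc j) = a (j + (l + 2))) \<and> (\<forall>j. refl_b b p (Suc j) = b (j + (l + 2)))"
    unfolding a a' b b'
    using cyclic_ext_symmetric_iff[OF \<open>0 < p\<close>, where f=a and c="int l + 1" and d=1]
      cyclic_ext_symmetric_iff[OF \<open>0 < p\<close>, where f=b and c="int (l + 1) + 1" and d=0]
    by (simp only:)
  finally show ?thesis
    by blast
qed

lemma periodic_seq_values:
  assumes "periodic_seq a p" "0 < p" "1 \<le> j" "\<forall>i\<in>{1..p}. P (a i)"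
  shows "P (a j)" "P (refl_a a p j)"
proof -
  have "P (cyclic_ext a p k)" for k
    using cyclic_ext_in_image[OF assms(2), of a k] assms(4) by (auto simp: image_iff)
  then show "P (a j)" "P (refl_a a p j)"
    using cyclic_ext_of_nat[OF assms(1-3)] refl_a_eq_cyclic_ext[OF assms(2,3)] by metis+
qed

theorem mainTheorem4:
  fixes a b :: "nat \<Rightarrow> real" and p l :: nat
  assumes "p \<ge> 3"
    and "periodic_seq a p" and "periodic_seq b p"
    and "\<forall>j\<ge>1. a j > 0"
    and "1 \<le> l" and "l \<le> p - 2"
  shows "doubly_palindromic a b p l \<longleftrightarrow>
    (\<forall>z. Im z > 0 \<longrightarrow> mfun (refl_a a p) (refl_b b p) 1 z = mfun a b (l + 2) z)"
proof -
  have "0 < p" "l + 2 \<le> p"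
    using assms(1,6) by auto
  define a\<^sub>r b\<^sub>r a\<^sub>s b\<^sub>s
    where "a\<^sub>r = (\<lambda>j. refl_a a p (Suc j))" and "b\<^sub>r = (\<lambda>j. refl_b b p (Suc j))"
      and "a\<^sub>s = (\<lambda>j. a (j + (l + 2)))" and "b\<^sub>s = (\<lambda>j. b (j + (l + 2)))"
  have mfuns: "mfun (refl_a a p) (refl_b b p) 1 = mfun a\<^sub>r b\<^sub>r 0" "mfun a b (l + 2) = mfun a\<^sub>s b\<^sub>s 0"
    using mfun_shift[of "refl_a a p" "refl_b b p" 0 1] mfun_shift[of a b 0 "l + 2"]
    by (auto simp: a\<^sub>r_def b\<^sub>r_def a\<^sub>s_def b\<^sub>s_def fun_eq_iff)
  have dp: "doubly_palindromic a b p l \<longleftrightarrow> a\<^sub>r = a\<^sub>s \<and> b\<^sub>r = b\<^sub>s"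
    using doubly_palindromic_iff_reflection_eq_shift[OF assms(2,3,5) \<open>l + 2 \<le> p\<close>]
    by (auto simp: a\<^sub>r_def b\<^sub>r_def a\<^sub>s_def b\<^sub>s_def fun_eq_iff)
  define K where "K = (\<Sum>i=1..p. (a i)^2)"
  have "\<forall>i\<in>{1..p}. (a i)^2 \<le> K \<and> 0 < a i"
    using assms(4) by (auto simp: K_def intro!: member_le_sum)
  then have bounds: "(a\<^sub>r j)^2 \<le> K" "(a\<^sub>s j)^2 \<le> K" "0 < a\<^sub>r j" "0 < a\<^sub>s j" for j
    using periodic_seq_values[OF assms(2) \<open>0 < p\<close>, of "Suc j" "\<lambda>x. x^2 \<le> K \<and> 0 < x"]
      periodic_seq_values[OF assms(2) \<open>0 < p\<close>, of "j + (l + 2)" "\<lambda>x. x^2 \<le> K \<and> 0 < x"]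
    by (auto simp: a\<^sub>r_def a\<^sub>s_def)
  show ?thesis
  proof
    assume "\<forall>z. Im z > 0 \<longrightarrow> mfun (refl_a a p) (refl_b b p) 1 z = mfun a b (l + 2) z"
    then have "\<forall>\<^sub>F y in at_top. mfun a\<^sub>r b\<^sub>r 0 (\<i> * complex_of_real y) = mfun a\<^sub>s b\<^sub>s 0 (\<i> * complex_of_real y)"
      unfolding mfuns by (auto intro: eventually_mono[OF eventually_gt_at_top[of 0]])
    then have "a\<^sub>r (0 + j) = a\<^sub>s (0 + j) \<and> b\<^sub>r (0 + j) = b\<^sub>s (0 + j)" for j
      by (rule mfun_eventually_eq_imp_coeffs_eq[of a\<^sub>r K a\<^sub>s, OF bounds])
    then show "doubly_palindromic a b p l"
      using dp by (simp add: fun_eq_iff)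
  qed (use dp mfuns in simp)
qed

end
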